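(* If $K$ is a compact Collins–Roscoe space, then $K$ is monotonically Sokolov.
   Context: All spaces are Hausdorff. A family $\mathcal N$ of subsets of a space $T$ is an external network of $A\subset T$ in $T$ if for every $a\in A$ and every open $U\ni a$ there is $N\in\mathcal N$ with $a\in N\subset U$. A space $T$ is a Collins–Roscoe space if to each $x\in T$ one can assign a countable family $\mathcal O(x)$ of subsets of $T$ such that for every $A\subset T$, $\bigcup\{\mathcal O(x): x\in A\}$ is an external network of $\overline{A}$ in $T$. Let $X,Y$ be sets, $\mathcal O$ a family of subsets of $X$ closed under countable increasing unions, $\mathcal N$ a family of subsets of $Y$, and $f:\mathcal O\to\mathcal N$. Then $f$ is $\omega$-monotone if: (a) $f(A)$ is countable for every countable $A\in\mathcal O$; (b) $A\subset B$, $A,B\in\mathcal O$ imply $f(A)\subset f(B)$; (c) if $A_n\in\mathcal O$ and $A_n\subset A_{n+1}$ for all $n\in\omega$ then $f(\bigcup_n A_n)=\bigcup_n f(A_n)$. A space $T$ is monotonically Sokolov if to every countable family $\mathcal F$ of closed subsets of $T$ one can assign a continuous retraction $r_{\mathcal F}:T\to T$ and a countable external network $\mathcal N(\mathcal F)$ of $r_{\mathcal F}(T)$ in $T$ such that $r_{\mathcal F}(F)\subset F$ for every $F\in\mathcal F$ and the assignment $\mathcal F\mapsto\mathcal N(\mathcal F)$ is $\omega$-monotone. *)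

theory Defs
  imports "HOL-Analysis.Analysis"
begin

definition external_network :: "'a topology \<Rightarrow> 'a set set \<Rightarrow> 'a set \<Rightarrow> bool" where
  "external_network X NN A \<longleftrightarrow>
     NN \<subseteq> Pow (topspace X) \<and>
     (\<forall>a\<in>A. \<forall>U. openin X U \<and> a \<in> U \<longrightarrow> (\<exists>N\<in>NN. a \<in> N \<and> N \<subseteq> U))"

definition Collins_Roscoe :: "'a topology \<Rightarrow> bool" where
  "Collins_Roscoe X \<longleftrightarrow>
     (\<exists>Ob :: 'a \<Rightarrow> 'a set set.
        (\<forall>x\<in>topspace X. countable (Ob x) \<and> Ob x \<subseteq> Pow (topspace X)) \<and>
        (\<forall>A. A \<subseteq> topspace X \<longrightarrow>
              external_network X (\<Union>x\<in>A. Ob x) (X closure_of A)))"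

definition omega_monotone :: "'x set set \<Rightarrow> ('x set \<Rightarrow> 'y set) \<Rightarrow> bool" where
  "omega_monotone D f \<longleftrightarrow>
     (\<forall>A\<in>D. countable A \<longrightarrow> countable (f A)) \<and>
     (\<forall>A\<in>D. \<forall>B\<in>D. A \<subseteq> B \<longrightarrow> f A \<subseteq> f B) \<and>
     (\<forall>An :: nat \<Rightarrow> 'x set. (\<forall>n. An n \<in> D) \<and> (\<forall>n. An n \<subseteq> An (Suc n)) \<longrightarrow>
          f (\<Union>n. An n) = (\<Union>n. f (An n)))"

definition countable_closed_families :: "'a topology \<Rightarrow> 'a set set set" where
  "countable_closed_families X = {F. countable F \<and> (\<forall>S\<in>F. closedin X S)}"

definition monotonically_Sokolov :: "'a topology \<Rightarrow> bool" where
  "monotonically_Sokolov X \<longleftrightarrow>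
     (\<exists>(r :: 'a set set \<Rightarrow> 'a \<Rightarrow> 'a) (N :: 'a set set \<Rightarrow> 'a set set).
        (\<forall>F\<in>countable_closed_families X.
            continuous_map X X (r F) \<and>
            (\<forall>x\<in>topspace X. r F (r F x) = r F x) \<and>
            countable (N F) \<and>
            external_network X (N F) (r F ` topspace X) \<and>
            (\<forall>S\<in>F. r F ` S \<subseteq> S)) \<and>
        omega_monotone (countable_closed_families X) N)"

end

theory Submission
  imports Defs "HOL-Library.Order_Continuity"
begin

text \<open>
  Given a countable family F of closed sets, let A be the least set of points such that, for the
  countable family C of closed sets consisting of F and the closures of the members of O(a),
  a in A, and for separators chosen for all disjoint pairs of C (open sets with disjoint closures),
  A meets every nonempty finite intersection of complements of closures of separators.
  The retraction sends y to the unique point m of the closure of A that lies in no separator whose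
  closure misses y: m exists by compactness, the finite subfamilies being witnessed inside A, and it
  is unique because the Collins-Roscoe network at points of the closure of A separates any two of
  them, and any of them from a member of F not containing it, by disjoint members of C.
  This map has closed graph, hence is continuous on the compact space, and the union of the O(a),
  a in A, is an external network of the closure of A. Since A is the least fixed point of an
  operator commuting with increasing unions in both arguments, F maps to A omega-monotonically.
\<close>

lemma finite_subset_UN_incseq:
  fixes M :: "nat \<Rightarrow> 'a set"
  assumes "incseq M" "finite L" "L \<subseteq> (\<Union>i. M i)"
  obtains i where "L \<subseteq> M i"
proof -
  have "subset.chain UNIV (range M)"
    using assms(1) by (simp add: subset.chain_def) (metis incseqD nat_le_linear psubsetI)
  then show thesis
    using finite_subset_Union_chain[OF assms(2,3)] that by blast
qed

lemma sup_continuous_setI: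
  fixes f :: "'a set \<Rightarrow> 'b set"
  assumes "mono f" and "\<And>M. incseq M \<Longrightarrow> f (\<Union>i. M i) \<subseteq> (\<Union>i. f (M i))"
  shows "sup_continuous f"
  unfolding sup_continuous_def
proof (intro allI impI equalityI)
  fix M :: "nat \<Rightarrow> 'a set" assume "incseq M"
  then show "f (SUP i. M i) \<le> (SUP i. f (M i))" using assms(2) by simp
  show "(SUP i. f (M i)) \<le> f (SUP i. M i)"
    using monoD[OF assms(1)] by (simp add: UN_least UN_upper)
qed

lemma sup_continuous_image: "sup_continuous (image f)"
  by (simp add: sup_continuous_def image_UN)

lemma countable_lfp:
  fixes f :: "'a set \<Rightarrow> 'a set"
  assumes "sup_continuous f" and "\<And>A. countable A \<Longrightarrow> countable (f A)"
  shows "countable (lfp f)"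
proof -
  have "countable ((f ^^ i) {})" for i
    by (induction i) (simp_all add: assms(2))
  then show ?thesis
    by (simp add: sup_continuous_lfp[OF assms(1)])
qed

lemma lfp_UN_incseq:
  fixes f :: "'p set \<Rightarrow> 'a set \<Rightarrow> 'a set"
  assumes mono: "\<And>P Q A B. P \<subseteq> Q \<Longrightarrow> A \<subseteq> B \<Longrightarrow> f P A \<subseteq> f Q B"
    and cont: "\<And>As. incseq As \<Longrightarrow> f (\<Union>n. Ps n) (\<Union>n. As n) \<subseteq> (\<Union>n. f (Ps n) (As n))"
    and "incseq Ps"
  shows "lfp (f (\<Union>n. Ps n)) = (\<Union>n. lfp (f (Ps n)))"
proof
  have lfp_mono_param: "lfp (f P) \<subseteq> lfp (f Q)" if "P \<subseteq> Q" for P Q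
    by (rule lfp_mono) (simp add: mono that)
  show "(\<Union>n. lfp (f (Ps n))) \<subseteq> lfp (f (\<Union>n. Ps n))"
    by (intro UN_least lfp_mono_param) blast
  have "incseq (\<lambda>n. lfp (f (Ps n)))"
    using \<open>incseq Ps\<close> by (simp add: incseq_def lfp_mono_param)
  then have "f (\<Union>n. Ps n) (\<Union>n. lfp (f (Ps n))) \<subseteq> (\<Union>n. f (Ps n) (lfp (f (Ps n))))"
    by (rule cont)
  also have "\<dots> = (\<Union>n. lfp (f (Ps n)))"
    by (simp add: lfp_fixpoint monoI mono)
  finally show "lfp (f (\<Union>n. Ps n)) \<subseteq> (\<Union>n. lfp (f (Ps n)))"
    by (rule lfp_lowerbound)
qed

definition meet_witnesses :: "'a set \<Rightarrow> 'a set set \<Rightarrow> 'a set" where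
  "meet_witnesses S \<O> = (\<lambda>L. SOME z. z \<in> S \<inter> \<Inter>L) ` {L. finite L \<and> L \<subseteq> \<O> \<and> S \<inter> \<Inter>L \<noteq> {}}"

lemma meet_witnesses_subset: "meet_witnesses S \<O> \<subseteq> S"
proof
  fix z assume "z \<in> meet_witnesses S \<O>"
  then obtain L where "S \<inter> \<Inter>L \<noteq> {}" "z = (SOME z. z \<in> S \<inter> \<Inter>L)"
    unfolding meet_witnesses_def by blast
  then show "z \<in> S"
    using some_in_eq[of "S \<inter> \<Inter>L"] by blast
qed

lemma meet_witness_exists:
  assumes "finite L" "L \<subseteq> \<O>" "S \<inter> \<Inter>L \<noteq> {}"
  obtains z where "z \<in> meet_witnesses S \<O>" "z \<in> S \<inter> \<Inter>L"
proof
  show "(SOME z. z \<in> S \<inter> \<Inter>L) \<in> meet_witnesses S \<O>"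
    unfolding meet_witnesses_def using assms by blast
  show "(SOME z. z \<in> S \<inter> \<Inter>L) \<in> S \<inter> \<Inter>L"
    using assms(3) some_in_eq by metis
qed

lemma countable_meet_witnesses:
  assumes "countable \<O>" shows "countable (meet_witnesses S \<O>)"
  unfolding meet_witnesses_def
  by (rule countable_image, rule countable_subset[OF _ countable_Collect_finite_subset[OF assms]]) blast

lemma meet_witnesses_mono: "\<O> \<subseteq> \<P> \<Longrightarrow> meet_witnesses S \<O> \<subseteq> meet_witnesses S \<P>"
  unfolding meet_witnesses_def by blast

lemma sup_continuous_meet_witnesses: "sup_continuous (meet_witnesses S)"
proof (rule sup_continuous_setI)
  show "mono (meet_witnesses S)"
    by (rule monoI) (rule meet_witnesses_mono)
  fix M :: "nat \<Rightarrow> 'a set set" assume "incseq M"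
  show "meet_witnesses S (\<Union>i. M i) \<subseteq> (\<Union>i. meet_witnesses S (M i))"
  proof
    fix z assume "z \<in> meet_witnesses S (\<Union>i. M i)"
    then obtain L where L: "finite L" "L \<subseteq> (\<Union>i. M i)" "S \<inter> \<Inter>L \<noteq> {}"
      and z: "z = (SOME z. z \<in> S \<inter> \<Inter>L)"
      unfolding meet_witnesses_def by blast
    obtain i where "L \<subseteq> M i"
      using finite_subset_UN_incseq[OF \<open>incseq M\<close> L(1,2)] .
    then have "z \<in> meet_witnesses S (M i)"
      unfolding meet_witnesses_def z using L(1,3) by blast
    then show "z \<in> (\<Union>i. meet_witnesses S (M i))" by blast
  qed
qed

definition separating_pair :: "'a topology \<Rightarrow> 'a set \<Rightarrow> 'a set \<Rightarrow> 'a set \<times> 'a set" where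
  "separating_pair X C D = (SOME (U, V). openin X U \<and> openin X V \<and> C \<subseteq> U \<and> D \<subseteq> V \<and>
      disjnt (X closure_of U) (X closure_of V))"

lemma separating_pair:
  assumes "normal_space X" "closedin X C" "closedin X D" "disjnt C D"
    and "separating_pair X C D = (U, V)"
  shows "openin X U \<and> openin X V \<and> C \<subseteq> U \<and> D \<subseteq> V \<and> disjnt (X closure_of U) (X closure_of V)"
proof -
  obtain U' V' where "openin X U' \<and> openin X V' \<and> C \<subseteq> U' \<and> D \<subseteq> V' \<and>
      disjnt (X closure_of U') (X closure_of V')"
    using assms(1-4) unfolding normal_space_disjoint_closures by meson
  then have "case (U', V') of (U, V) \<Rightarrow> openin X U \<and> openin X V \<and> C \<subseteq> U \<and> D \<subseteq> V \<and>
      disjnt (X closure_of U) (X closure_of V)"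
    by simp
  from someI[of "\<lambda>(U, V). openin X U \<and> openin X V \<and> C \<subseteq> U \<and> D \<subseteq> V \<and>
      disjnt (X closure_of U) (X closure_of V)", OF this] show ?thesis
    using assms(5) unfolding separating_pair_def by simp
qed

definition separators :: "'a topology \<Rightarrow> 'a set set \<Rightarrow> 'a set set" where
  "separators X \<C> =
    (\<Union>C\<in>\<C>. \<Union>D\<in>{D \<in> \<C>. disjnt C D}. {fst (separating_pair X C D), snd (separating_pair X C D)})"

lemma separators_openin:
  assumes "normal_space X" "\<And>C. C \<in> \<C> \<Longrightarrow> closedin X C" "U \<in> separators X \<C>"
  shows "openin X U"
proof -
  obtain C D where CD: "C \<in> \<C>" "D \<in> \<C>" "disjnt C D"
    and U: "U = fst (separating_pair X C D) \<or> U = snd (separating_pair X C D)"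
    using assms(3) unfolding separators_def by blast
  obtain V W where VW: "separating_pair X C D = (V, W)" by fastforce
  show ?thesis
    using U separating_pair[OF assms(1) assms(2)[OF CD(1)] assms(2)[OF CD(2)] CD(3) VW] VW by auto
qed

lemma separators_separate:
  assumes "normal_space X" "C \<in> \<C>" "D \<in> \<C>" "closedin X C" "closedin X D" "disjnt C D"
  obtains U V where "U \<in> separators X \<C>" "V \<in> separators X \<C>" "C \<subseteq> U" "D \<subseteq> V"
    "disjnt (X closure_of U) (X closure_of V)"
proof -
  obtain U V where UV: "separating_pair X C D = (U, V)" by fastforce
  then have "U \<in> separators X \<C>" "V \<in> separators X \<C>"
    using assms(2,3,6) unfolding separators_def by force+
  with separating_pair[OF assms(1,4-6) UV] that show thesis by blast
qed

lemma countable_separators: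
  assumes "countable \<C>" shows "countable (separators X \<C>)"
  unfolding separators_def using assms by (intro countable_UN countable_insert) auto

lemma sup_continuous_separators: "sup_continuous (separators X)"
proof (rule sup_continuous_setI)
  show "mono (separators X)"
    by (rule monoI) (auto simp: separators_def)
  fix M :: "nat \<Rightarrow> 'a set set" assume "incseq M"
  show "separators X (\<Union>i. M i) \<subseteq> (\<Union>i. separators X (M i))"
  proof
    fix U assume "U \<in> separators X (\<Union>i. M i)"
    then obtain C D where CD: "C \<in> (\<Union>i. M i)" "D \<in> (\<Union>i. M i)" "disjnt C D"
      and U: "U \<in> {fst (separating_pair X C D), snd (separating_pair X C D)}"
      unfolding separators_def by blast
    obtain i where "{C, D} \<subseteq> M i"
      using finite_subset_UN_incseq[OF \<open>incseq M\<close>, of "{C, D}"] CD(1,2) by auto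
    then have "U \<in> separators X (M i)"
      using CD(3) U unfolding separators_def by blast
    then show "U \<in> (\<Union>i. separators X (M i))" by blast
  qed
qed

lemma continuous_map_closed_graph:
  assumes "compact_space Y" "f \<in> topspace X \<rightarrow> topspace Y"
    and "closedin (prod_topology X Y) ((\<lambda>x. (x, f x)) ` topspace X)"
  shows "continuous_map X Y f"
  unfolding continuous_map_closedin
proof (intro conjI allI impI assms(2))
  fix C assume "closedin Y C"
  have "{x \<in> topspace X. f x \<in> C} = fst ` ((\<lambda>x. (x, f x)) ` topspace X \<inter> topspace X \<times> C)"
    by force
  moreover have "closedin (prod_topology X Y) ((\<lambda>x. (x, f x)) ` topspace X \<inter> topspace X \<times> C)"
    using assms(3) \<open>closedin Y C\<close> by (simp add: closedin_Int closedin_prod_Times_iff)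
  ultimately show "closedin X {x \<in> topspace X. f x \<in> C}"
    using closed_map_fst[OF assms(1)] unfolding closed_map_def by metis
qed

lemma external_network_subset:
  "external_network X \<N> B \<Longrightarrow> A \<subseteq> B \<Longrightarrow> external_network X \<N> A"
  unfolding external_network_def by blast

locale compact_Collins_Roscoe =
  fixes K :: "'a topology" and Ob :: "'a \<Rightarrow> 'a set set"
  assumes Hausdorff: "Hausdorff_space K" and compact: "compact_space K"
    and countable_Ob: "\<And>x. countable (Ob x)"
    and network: "\<And>A. A \<subseteq> topspace K \<Longrightarrow> external_network K (\<Union>x\<in>A. Ob x) (K closure_of A)"
begin

lemma normal: "normal_space K"
  using Hausdorff compact compact_Hausdorff_or_regular_imp_normal_space by blast

definition closed_net :: "'a set set \<Rightarrow> 'a set \<Rightarrow> 'a set set" where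
  "closed_net F A = F \<union> (\<lambda>N. K closure_of N) ` (\<Union>x\<in>A. Ob x)"

definition separator_witnesses :: "'a set set \<Rightarrow> 'a set" where
  "separator_witnesses \<C> =
    meet_witnesses (topspace K) ((\<lambda>U. topspace K - K closure_of U) ` separators K \<C>)"

definition grow :: "'a set set \<Rightarrow> 'a set \<Rightarrow> 'a set" where
  "grow F A = separator_witnesses (closed_net F A)"

definition skeleton :: "'a set set \<Rightarrow> 'a set" where
  "skeleton F = lfp (grow F)"

lemma closed_net_mono: "F \<subseteq> G \<Longrightarrow> A \<subseteq> B \<Longrightarrow> closed_net F A \<subseteq> closed_net G B"
  unfolding closed_net_def by blast

lemma closed_net_UN: "closed_net (\<Union>n. Fs n) (\<Union>n. As n) = (\<Union>n. closed_net (Fs n) (As n))"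
  unfolding closed_net_def by blast

lemma countable_closed_net: "countable F \<Longrightarrow> countable A \<Longrightarrow> countable (closed_net F A)"
  unfolding closed_net_def by (simp add: countable_Ob)

lemma sup_continuous_separator_witnesses: "sup_continuous separator_witnesses"
  unfolding separator_witnesses_def
  by (intro sup_continuous_compose[OF sup_continuous_meet_witnesses]
      sup_continuous_compose[OF sup_continuous_image] sup_continuous_separators)

lemma grow_mono: "F \<subseteq> G \<Longrightarrow> A \<subseteq> B \<Longrightarrow> grow F A \<subseteq> grow G B"
  unfolding grow_def
  by (intro monoD[OF sup_continuous_mono[OF sup_continuous_separator_witnesses]] closed_net_mono)

lemma grow_UN:
  assumes "incseq Fs" "incseq As"
  shows "grow (\<Union>n. Fs n) (\<Union>n. As n) = (\<Union>n. grow (Fs n) (As n))"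
proof -
  have "incseq (\<lambda>n. closed_net (Fs n) (As n))"
    using assms by (simp add: incseq_def closed_net_mono)
  then show ?thesis
    unfolding grow_def closed_net_UN
    using sup_continuousD[OF sup_continuous_separator_witnesses] by simp
qed

lemma sup_continuous_grow: "sup_continuous (grow F)"
proof (rule sup_continuous_setI)
  show "mono (grow F)"
    by (rule monoI) (simp add: grow_mono)
  show "grow F (\<Union>i. M i) \<subseteq> (\<Union>i. grow F (M i))" if "incseq M" for M
    using grow_UN[of "\<lambda>_. F" M] that by simp
qed

lemma grow_skeleton: "grow F (skeleton F) = skeleton F"
  unfolding skeleton_def by (rule lfp_fixpoint[OF sup_continuous_mono[OF sup_continuous_grow]])

lemma skeleton_subset: "skeleton F \<subseteq> topspace K"
  unfolding skeleton_def grow_def separator_witnesses_def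
  by (rule lfp_lowerbound) (rule meet_witnesses_subset)

lemma countable_skeleton: "countable F \<Longrightarrow> countable (skeleton F)"
  unfolding skeleton_def
  by (rule countable_lfp[OF sup_continuous_grow]) (simp add: grow_def separator_witnesses_def
      countable_meet_witnesses countable_separators countable_closed_net)

lemma skeleton_mono: "F \<subseteq> G \<Longrightarrow> skeleton F \<subseteq> skeleton G"
  unfolding skeleton_def by (intro lfp_mono grow_mono) auto

lemma skeleton_UN: "incseq Fs \<Longrightarrow> skeleton (\<Union>n. Fs n) = (\<Union>n. skeleton (Fs n))"
  unfolding skeleton_def by (rule lfp_UN_incseq) (simp_all add: grow_mono grow_UN)

abbreviation skeleton_separators :: "'a set set \<Rightarrow> 'a set set" where
  "skeleton_separators F \<equiv> separators K (closed_net F (skeleton F))"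

lemma skeleton_meets_co_closures:
  assumes "finite L" "L \<subseteq> skeleton_separators F" "y \<in> topspace K" "\<forall>U\<in>L. y \<notin> K closure_of U"
  obtains z where "z \<in> skeleton F" "\<forall>U\<in>L. z \<notin> K closure_of U"
proof -
  have "(\<lambda>U. topspace K - K closure_of U) ` L
      \<subseteq> (\<lambda>U. topspace K - K closure_of U) ` skeleton_separators F"
    using assms(2) by blast
  moreover have "topspace K \<inter> \<Inter>((\<lambda>U. topspace K - K closure_of U) ` L) \<noteq> {}"
    using assms(3,4) by blast
  ultimately obtain z where z: "z \<in> grow F (skeleton F)"
    "z \<in> topspace K \<inter> \<Inter>((\<lambda>U. topspace K - K closure_of U) ` L)"
    unfolding grow_def separator_witnesses_def
    by (rule meet_witness_exists[OF finite_imageI[OF assms(1)]])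
  have "z \<in> skeleton F"
    using z(1) by (simp only: grow_skeleton)
  moreover have "\<forall>U\<in>L. z \<notin> K closure_of U"
    using z(2) by blast
  ultimately show thesis
    by (rule that)
qed

definition retracts_to :: "'a set set \<Rightarrow> 'a \<Rightarrow> 'a \<Rightarrow> bool" where
  "retracts_to F y m \<longleftrightarrow> m \<in> K closure_of skeleton F \<and>
     (\<forall>U\<in>skeleton_separators F. m \<in> U \<longrightarrow> y \<in> K closure_of U)"

definition retraction :: "'a set set \<Rightarrow> 'a \<Rightarrow> 'a" where
  "retraction F y = (THE m. retracts_to F y m)"

lemma closed_net_separates_point:
  assumes "m \<in> K closure_of skeleton F" "closedin K S" "m \<notin> S"
  obtains N where "N \<in> closed_net F (skeleton F)" "m \<in> N" "disjnt N S"
proof -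
  have m: "m \<in> topspace K"
    using assms(1) closure_of_subset_topspace by fast
  obtain W where W: "openin K W" "m \<in> W" "disjnt S (K closure_of W)"
    using compact_Hausdorff_imp_regular_space[OF compact Hausdorff] assms(2,3) m
    unfolding regular_space by blast
  have net: "external_network K (\<Union>x\<in>skeleton F. Ob x) (K closure_of skeleton F)"
    by (rule network[OF skeleton_subset])
  then obtain N0 where N0: "N0 \<in> (\<Union>x\<in>skeleton F. Ob x)" "m \<in> N0" "N0 \<subseteq> W"
    using assms(1) W(1,2) unfolding external_network_def by blast
  have "N0 \<subseteq> topspace K"
    using net N0(1) unfolding external_network_def by blast
  show thesis
  proof
    show "K closure_of N0 \<in> closed_net F (skeleton F)"
      using N0(1) unfolding closed_net_def by blast
    show "m \<in> K closure_of N0"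
      using closure_of_subset[OF \<open>N0 \<subseteq> topspace K\<close>] N0(2) by blast
    show "disjnt (K closure_of N0) S"
      using closure_of_mono[OF N0(3)] W(3) by (auto simp: disjnt_def)
  qed
qed

context
  fixes F :: "'a set set"
  assumes closed_F: "\<forall>S\<in>F. closedin K S"
begin

lemma closedin_closed_net: "C \<in> closed_net F A \<Longrightarrow> closedin K C"
  using closed_F unfolding closed_net_def by auto

lemma openin_separators: "U \<in> separators K (closed_net F A) \<Longrightarrow> openin K U"
  by (rule separators_openin[OF normal closedin_closed_net])

lemma skeleton_separator_subset_closure: "U \<in> skeleton_separators F \<Longrightarrow> U \<subseteq> K closure_of U"
  by (intro closure_of_subset openin_subset openin_separators)

lemma retracts_to_exists:
  assumes y: "y \<in> topspace K"
  obtains m where "retracts_to F y m"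
proof -
  let ?M = "K closure_of skeleton F"
  let ?\<V> = "{U \<in> skeleton_separators F. y \<notin> K closure_of U}"
  have "compactin K ?M"
    by (rule closedin_compact_space[OF compact closedin_closure_of])
  moreover have "\<forall>C\<in>(\<lambda>U. topspace K - U) ` ?\<V>. closedin K C"
    by (auto intro!: closedin_diff openin_separators)
  moreover have "?M \<inter> \<Inter>\<F> \<noteq> {}"
    if fin: "finite \<F>" "\<F> \<subseteq> (\<lambda>U. topspace K - U) ` ?\<V>" for \<F>
  proof -
    obtain L where L: "finite L" "L \<subseteq> ?\<V>" "\<F> = (\<lambda>U. topspace K - U) ` L"
      using fin by (meson finite_subset_image)
    have "L \<subseteq> skeleton_separators F" "\<forall>U\<in>L. y \<notin> K closure_of U"
      using L(2) by auto
    then obtain z where z: "z \<in> skeleton F" "\<forall>U\<in>L. z \<notin> K closure_of U"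
      by (rule skeleton_meets_co_closures[OF L(1) _ y])
    have "z \<in> topspace K"
      using z(1) skeleton_subset by blast
    moreover have "z \<notin> U" if "U \<in> L" for U
      using skeleton_separator_subset_closure \<open>L \<subseteq> skeleton_separators F\<close> z(2) that by blast
    moreover have "z \<in> ?M"
      using z(1) closure_of_subset[OF skeleton_subset] by blast
    ultimately show ?thesis
      using L(3) by blast
  qed
  ultimately have "?M \<inter> \<Inter>((\<lambda>U. topspace K - U) ` ?\<V>) \<noteq> {}"
    unfolding compactin_fip by blast
  then obtain m where "m \<in> ?M" "\<forall>U\<in>?\<V>. m \<notin> U"
    by blast
  then have "retracts_to F y m"
    unfolding retracts_to_def by blast
  then show thesis
    by (rule that)
qed

lemma retracts_to_avoids:
  assumes "retracts_to F y m" "C \<in> closed_net F (skeleton F)" "D \<in> closed_net F (skeleton F)"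
    "disjnt C D" "m \<in> C"
  obtains V where "V \<in> skeleton_separators F" "D \<subseteq> V" "y \<notin> K closure_of V"
proof -
  obtain U V where UV: "U \<in> skeleton_separators F"
    "V \<in> skeleton_separators F" "C \<subseteq> U" "D \<subseteq> V"
    "disjnt (K closure_of U) (K closure_of V)"
    by (rule separators_separate[OF normal assms(2,3) closedin_closed_net[OF assms(2)]
          closedin_closed_net[OF assms(3)] assms(4)])
  have "y \<in> K closure_of U"
    using assms(1,5) UV(1,3) unfolding retracts_to_def by blast
  with UV(5) have "y \<notin> K closure_of V"
    by (meson disjnt_iff)
  with UV(2,4) show thesis by (rule that)
qed

lemma retracts_to_unique:
  assumes "retracts_to F y m" "retracts_to F y m'"
  shows "m = m'"
proof (rule ccontr)
  assume "m \<noteq> m'"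
  have M: "m \<in> K closure_of skeleton F" "m' \<in> K closure_of skeleton F"
    using assms unfolding retracts_to_def by blast+
  have "closedin K {m'}"
    using M(2) closure_of_subset_topspace closedin_Hausdorff_singleton[OF Hausdorff] by fast
  then obtain N where N: "N \<in> closed_net F (skeleton F)" "m \<in> N" "disjnt N {m'}"
    using closed_net_separates_point[OF M(1)] \<open>m \<noteq> m'\<close> by blast
  then have "m' \<notin> N"
    by (auto simp: disjnt_iff)
  then obtain N' where N': "N' \<in> closed_net F (skeleton F)" "m' \<in> N'" "disjnt N' N"
    by (rule closed_net_separates_point[OF M(2) closedin_closed_net[OF N(1)]])
  obtain V where "V \<in> skeleton_separators F" "N' \<subseteq> V" "y \<notin> K closure_of V"
    by (rule retracts_to_avoids[OF assms(1) N(1) N'(1) disjnt_sym[OF N'(3)] N(2)])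
  then show False
    using assms(2) N'(2) unfolding retracts_to_def by blast
qed

lemma retracts_to_self:
  assumes "m \<in> K closure_of skeleton F"
  shows "retracts_to F m m"
  unfolding retracts_to_def using assms skeleton_separator_subset_closure by blast

lemma retracts_to_closed_member:
  assumes "retracts_to F y m" "S \<in> F" "y \<in> S"
  shows "m \<in> S"
proof (rule ccontr)
  assume "m \<notin> S"
  have S: "S \<in> closed_net F (skeleton F)"
    using assms(2) unfolding closed_net_def by blast
  have "m \<in> K closure_of skeleton F"
    using assms(1) unfolding retracts_to_def by blast
  then obtain N where N: "N \<in> closed_net F (skeleton F)" "m \<in> N" "disjnt N S"
    using closed_net_separates_point bspec[OF closed_F assms(2)] \<open>m \<notin> S\<close> by metis
  obtain V where V: "V \<in> skeleton_separators F" "S \<subseteq> V" "y \<notin> K closure_of V"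
    by (rule retracts_to_avoids[OF assms(1) N(1) S N(3,2)])
  then show False
    using assms(3) skeleton_separator_subset_closure[OF V(1)] by blast
qed

lemma closedin_retracts_to_graph:
  "closedin (prod_topology K K) {(y, m). y \<in> topspace K \<and> retracts_to F y m}"
proof -
  let ?\<U> = "skeleton_separators F"
  let ?M = "K closure_of skeleton F"
  define \<G> where "\<G> = insert (topspace K \<times> ?M)
      ((\<lambda>U. topspace K \<times> topspace K - (topspace K - K closure_of U) \<times> U) ` ?\<U>)"
  have "?M \<subseteq> topspace K"
    by (rule closure_of_subset_topspace)
  then have eq: "{(y, m). y \<in> topspace K \<and> retracts_to F y m} = \<Inter>\<G>"
    unfolding retracts_to_def \<G>_def by auto
  have "closedin (prod_topology K K) (topspace K \<times> topspace K - (topspace K - K closure_of U) \<times> U)"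
    if "U \<in> ?\<U>" for U
  proof -
    have "openin (prod_topology K K) ((topspace K - K closure_of U) \<times> U)"
      using openin_separators[OF that] by (simp add: openin_prod_Times_iff openin_diff)
    then show ?thesis
      by (metis closedin_diff closedin_topspace topspace_prod_topology)
  qed
  moreover have "closedin (prod_topology K K) (topspace K \<times> ?M)"
    by (simp add: closedin_prod_Times_iff)
  ultimately have "closedin (prod_topology K K) C" if "C \<in> \<G>" for C
    using that unfolding \<G>_def by blast
  then show ?thesis
    unfolding eq \<G>_def by (intro closedin_Inter) auto
qed

lemma retracts_to_retraction:
  assumes "y \<in> topspace K"
  shows "retracts_to F y (retraction F y)"
proof -
  obtain m where "retracts_to F y m"
    using retracts_to_exists[OF assms] .
  then show ?thesis
    unfolding retraction_def by (metis theI retracts_to_unique)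
qed

lemma retraction_in_closure: "y \<in> topspace K \<Longrightarrow> retraction F y \<in> K closure_of skeleton F"
  using retracts_to_retraction unfolding retracts_to_def by blast

lemma retraction_in_topspace: "y \<in> topspace K \<Longrightarrow> retraction F y \<in> topspace K"
  using retraction_in_closure closure_of_subset_topspace by fast

lemma retraction_idempotent:
  assumes "y \<in> topspace K"
  shows "retraction F (retraction F y) = retraction F y"
  using retracts_to_unique[OF retracts_to_retraction[OF retraction_in_topspace[OF assms]]
      retracts_to_self[OF retraction_in_closure[OF assms]]] .

lemma retraction_image_subset:
  assumes "S \<in> F"
  shows "retraction F ` S \<subseteq> S"
proof
  fix x assume "x \<in> retraction F ` S"
  then obtain y where "y \<in> S" "x = retraction F y"
    by blast
  moreover have "y \<in> topspace K"
    using \<open>y \<in> S\<close> closedin_subset[OF bspec[OF closed_F assms]] by blast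
  ultimately show "x \<in> S"
    using retracts_to_closed_member[OF retracts_to_retraction assms] by blast
qed

lemma continuous_map_retraction: "continuous_map K K (retraction F)"
proof (rule continuous_map_closed_graph[OF compact])
  show "retraction F \<in> topspace K \<rightarrow> topspace K"
    using retraction_in_topspace by blast
  have "(\<lambda>y. (y, retraction F y)) ` topspace K = {(y, m). y \<in> topspace K \<and> retracts_to F y m}"
    using retracts_to_retraction retracts_to_unique by (auto simp: image_iff)
  then show "closedin (prod_topology K K) ((\<lambda>y. (y, retraction F y)) ` topspace K)"
    using closedin_retracts_to_graph by simp
qed

end

lemma omega_monotone_skeleton_network:
  "omega_monotone (countable_closed_families K) (\<lambda>F. \<Union>x\<in>skeleton F. Ob x)"
  unfolding omega_monotone_def
proof (intro conjI ballI allI impI)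
  show "countable (\<Union>x\<in>skeleton F. Ob x)" if "countable F" for F
    using countable_skeleton[OF that] by (simp add: countable_Ob)
  show "(\<Union>x\<in>skeleton F. Ob x) \<subseteq> (\<Union>x\<in>skeleton G. Ob x)" if "F \<subseteq> G" for F G
    using skeleton_mono[OF that] by blast
  fix Fs :: "nat \<Rightarrow> 'a set set"
  assume "(\<forall>n. Fs n \<in> countable_closed_families K) \<and> (\<forall>n. Fs n \<subseteq> Fs (Suc n))"
  then have "incseq Fs"
    by (simp add: incseq_SucI)
  then show "(\<Union>x\<in>skeleton (\<Union>n. Fs n). Ob x) = (\<Union>n. \<Union>x\<in>skeleton (Fs n). Ob x)"
    by (simp add: skeleton_UN UN_UN_flatten)
qed

theorem monotonically_Sokolov: "monotonically_Sokolov K"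
  unfolding monotonically_Sokolov_def
proof (intro exI[of _ retraction] exI[of _ "\<lambda>F. \<Union>x\<in>skeleton F. Ob x"] conjI ballI)
  fix F assume "F \<in> countable_closed_families K"
  then have closed: "\<forall>S\<in>F. closedin K S" and "countable F"
    unfolding countable_closed_families_def by auto
  show "continuous_map K K (retraction F)"
    by (rule continuous_map_retraction[OF closed])
  show "retraction F (retraction F y) = retraction F y" if "y \<in> topspace K" for y
    by (rule retraction_idempotent[OF closed that])
  show "countable (\<Union>x\<in>skeleton F. Ob x)"
    using countable_skeleton[OF \<open>countable F\<close>] by (simp add: countable_Ob)
  have "retraction F ` topspace K \<subseteq> K closure_of skeleton F"
    using retraction_in_closure[OF closed] by blast
  then show "external_network K (\<Union>x\<in>skeleton F. Ob x) (retraction F ` topspace K)"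
    by (rule external_network_subset[OF network[OF skeleton_subset]])
  show "retraction F ` S \<subseteq> S" if "S \<in> F" for S
    by (rule retraction_image_subset[OF closed that])
qed (rule omega_monotone_skeleton_network)

end

theorem corollary1p2:
  fixes K :: "'a topology"
  assumes "Hausdorff_space K" and "compact_space K" and "Collins_Roscoe K"
  shows "monotonically_Sokolov K"
proof -
  obtain Ob :: "'a \<Rightarrow> 'a set set" where
    countable: "\<forall>x\<in>topspace K. countable (Ob x) \<and> Ob x \<subseteq> Pow (topspace K)" and
    network: "\<forall>A. A \<subseteq> topspace K \<longrightarrow> external_network K (\<Union>x\<in>A. Ob x) (K closure_of A)"
    using assms(3) unfolding Collins_Roscoe_def by (elim exE conjE) blast
  interpret compact_Collins_Roscoe K "\<lambda>x. if x \<in> topspace K then Ob x else {}"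
  proof
    show "countable (if x \<in> topspace K then Ob x else {})" for x
      using countable by simp
    show "external_network K (\<Union>x\<in>A. if x \<in> topspace K then Ob x else {}) (K closure_of A)"
      if "A \<subseteq> topspace K" for A
    proof -
      have "(\<Union>x\<in>A. if x \<in> topspace K then Ob x else {}) = (\<Union>x\<in>A. Ob x)"
        using that by (intro SUP_cong) auto
      then show ?thesis
        using network that by simp
    qed
  qed (fact assms(1,2))+
  show ?thesis
    by (rule monotonically_Sokolov)
qed

end
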